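(* Let $\mathcal{S}_m\subset\mathcal{S}_n\subset\mathcal{T}$ be nested subsets of the training set with $|\mathcal{S}_m|=m<n=|\mathcal{S}_n|$, let $L_m,L_n$ be the corresponding empirical losses and $R_m,R_n$ the corresponding regularized empirical risks, with minimizers $\mathbf{w}_m^*,\mathbf{w}_n^*$. Let $\mathbf{w}_m$ be a (possibly random) vector such that $\mathbb{E}[R_m(\mathbf{w}_m)-R_m(\mathbf{w}_m^* )]\le \delta_m$. Then $$\mathbb{E}[R_n(\mathbf{w}_m)-R_n(\mathbf{w}_n^* )]\le \delta_m+\frac{2(n-m)}{n}\left(V_{n-m}+V_m\right)+2\left(V_m-V_n\right)+\frac{c(V_m-V_n)}{2}\|\mathbf{w}^*\|^2 .$$
   Context: Let $Z$ be a random variable with distribution $P$ on a space $\mathcal{Z}$ and $f:\mathbb{R}^p\times\mathcal{Z}\to\mathbb{R}$ a loss function. The expected loss is $L(\mathbf{w})=\mathbb{E}_Z[f(\mathbf{w},Z)]$ and $\mathbf{w}^*$ denotes a minimizer of $L$. The training set $\mathcal{T}=\{z_1,\dots,z_N\}$ consists of $N$ independent samples from $P$. For a (fixed, data-independent) subset $\mathcal{S}\subseteq\mathcal{T}$ with $k$ elements, the empirical loss is $L_{\mathcal{S}}(\mathbf{w})=\frac1k\sum_{z\in\mathcal{S}}f(\mathbf{w},z)$; for the sets $\mathcal{S}_k$ we write $L_k=L_{\mathcal{S}_k}$. Standing assumption: there are positive constants $V_k$ ($k\ge1$), nonincreasing in $k$, such that for every $k$ and every set $\mathcal{S}$ of $k$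 independent samples from $P$, $\mathbb{E}[\sup_{\mathbf{w}\in\mathbb{R}^p}|L(\mathbf{w})-L_{\mathcal{S}}(\mathbf{w})|]\le V_k$, where the expectation is over the samples. For a constant $c>0$ the regularized empirical risk is $R_k(\mathbf{w})=L_k(\mathbf{w})+\frac{cV_k}{2}\|\mathbf{w}\|^2$, with minimizer $\mathbf{w}_k^*$. Assumption: for every $z$, $f(\cdot,z)$ is convex and its gradient is $M$-Lipschitz continuous. Expectations in the claim are over the choice of the training samples (and any randomness in $\mathbf{w}_m$). *)

theory Defs
  imports "HOL-Probability.Probability"
begin

definition exp_loss :: "'z measure \<Rightarrow> ('w \<Rightarrow> 'z \<Rightarrow> real) \<Rightarrow> 'w \<Rightarrow> real" where
  "exp_loss P f w = (\<integral>z. f w z \<partial>P)"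

text \<open>Empirical loss on the samples indexed by I (training samples Z i, i in I),
  evaluated at the outcome omega of the underlying probability space.\<close>
definition emp_loss :: "('w \<Rightarrow> 'z \<Rightarrow> real) \<Rightarrow> (nat \<Rightarrow> 'o \<Rightarrow> 'z) \<Rightarrow> nat set \<Rightarrow> 'w \<Rightarrow> 'o \<Rightarrow> real" where
  "emp_loss f Z I w \<omega> = (\<Sum>i\<in>I. f w (Z i \<omega>)) / real (card I)"

definition reg_risk :: "('w::real_normed_vector \<Rightarrow> 'z \<Rightarrow> real) \<Rightarrow> (nat \<Rightarrow> 'o \<Rightarrow> 'z) \<Rightarrow> (nat \<Rightarrow> real) \<Rightarrow> real
      \<Rightarrow> nat set \<Rightarrow> 'w \<Rightarrow> 'o \<Rightarrow> real" where
  "reg_risk f Z V c I w \<omega> = emp_loss f Z I w \<omega> + c * V (card I) / 2 * (norm w)\<^sup>2"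

end

theory Submission
  imports Defs
begin

(*
  Let v_m, v_n minimise R_m, R_n and let u minimise L. With d the samples of S_n outside S_m,
  L_n = (m/n) L_m + ((n-m)/n) L_d, so the uniform deviations U_I = sup_w |L w - L_I w| give
  |L_n - L_m| <= (n-m)/n (U_d + U_m) at every w. Hence R_n(w) - R_n(v_n) exceeds R_m(w) - R_m(v_m)
  by at most twice this error plus the change c (V_m - V_n)/2 |v_n|^2 of the regulariser, and
  comparing R_n(v_n) with R_n(u), together with L(u) <= L(v_n), gives
  |v_n|^2 <= |u|^2 + 4 U_n / (c V_n). Taking expectations with E U_I <= V_|I| yields the bound.
  Beyond measurability, the law of the samples enters only through the hypothesis on E U_I, and
  the convexity and differentiability of the loss serve only to make everything continuous in w,
  hence measurable in the sample via a countable dense set of parameters.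
*)

lemma SUP_continuous_dense:
  fixes g :: "'a::topological_space \<Rightarrow> 'b::{complete_linorder, linorder_topology}"
  assumes g: "continuous_on UNIV g"
    and dense: "\<And>X. open X \<Longrightarrow> X \<noteq> {} \<Longrightarrow> \<exists>d\<in>D. d \<in> X"
  shows "(SUP x. g x) = (SUP d\<in>D. g d)"
proof (rule antisym)
  show "(SUP x. g x) \<le> (SUP d\<in>D. g d)"
  proof (rule SUP_least, rule ccontr)
    fix x assume "\<not> g x \<le> (SUP d\<in>D. g d)"
    then have "open {y. (SUP d\<in>D. g d) < g y}" "x \<in> {y. (SUP d\<in>D. g d) < g y}"
      using g by (auto intro!: open_Collect_less continuous_on_const)
    then obtain d where "d \<in> D" "(SUP d\<in>D. g d) < g d"
      using dense by blast
    then show False by (simp add: SUP_upper leD)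
  qed
qed (auto intro: SUP_subset_mono)

lemma minimum_eq_INF_dense:
  fixes g :: "'a::topological_space \<Rightarrow> real"
  assumes g: "continuous_on UNIV g" and min: "\<And>x. g x0 \<le> g x"
    and dense: "\<And>X. open X \<Longrightarrow> X \<noteq> {} \<Longrightarrow> \<exists>d\<in>D. d \<in> X"
  shows "g x0 = (INF d\<in>D. g d)"
proof (rule antisym)
  have "D \<noteq> {}" using dense[of UNIV] by auto
  then show "g x0 \<le> (INF d\<in>D. g d)" by (rule cINF_greatest) (rule min)
  show "(INF d\<in>D. g d) \<le> g x0"
  proof (rule dense_ge)
    fix a assume "g x0 < a"
    then have "open {y. g y < a}" "x0 \<in> {y. g y < a}"
      using g by (auto intro!: open_Collect_less continuous_on_const)
    then obtain d where "d \<in> D" "g d < a" using dense by blast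
    moreover have "bdd_below (g ` D)" using min by (auto intro!: bdd_belowI[where m="g x0"])
    ultimately show "(INF d\<in>D. g d) \<le> a" by (meson cINF_lower less_imp_le order_trans)
  qed
qed

lemma borel_measurable_minimum:
  fixes h :: "'w::{topological_space, second_countable_topology} \<Rightarrow> 'o \<Rightarrow> real"
  assumes cont: "\<And>\<omega>. \<omega> \<in> space M \<Longrightarrow> continuous_on UNIV (\<lambda>w. h w \<omega>)"
    and meas: "\<And>w. h w \<in> borel_measurable M"
    and min: "\<And>\<omega> w. \<omega> \<in> space M \<Longrightarrow> h (W \<omega>) \<omega> \<le> h w \<omega>"
  shows "(\<lambda>\<omega>. h (W \<omega>) \<omega>) \<in> borel_measurable M"
proof -
  obtain D :: "'w set" where D: "countable D" "\<And>X. open X \<Longrightarrow> X \<noteq> {} \<Longrightarrow> \<exists>d\<in>D. d \<in> X"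
    using countable_dense_setE by blast
  have "(\<lambda>\<omega>. INF d\<in>D. h d \<omega>) \<in> borel_measurable M"
    using D(1) meas by measurable
  moreover have "h (W \<omega>) \<omega> = (INF d\<in>D. h d \<omega>)" if "\<omega> \<in> space M" for \<omega>
    by (rule minimum_eq_INF_dense[OF cont min D(2)]) (use that in auto)
  ultimately show ?thesis by (simp cong: measurable_cong)
qed

lemma integrable_enn2real_nn_integral_le:
  fixes u :: "'o \<Rightarrow> ennreal"
  assumes u: "u \<in> borel_measurable M" and bound: "(\<integral>\<^sup>+\<omega>. u \<omega> \<partial>M) \<le> ennreal v" and "0 \<le> v"
  shows "integrable M (\<lambda>\<omega>. enn2real (u \<omega>))" "(\<integral>\<omega>. enn2real (u \<omega>) \<partial>M) \<le> v"
    and "AE \<omega> in M. u \<omega> \<noteq> \<infinity>"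
proof -
  have fin: "(\<integral>\<^sup>+\<omega>. u \<omega> \<partial>M) \<noteq> \<infinity>" using bound by (auto simp: top_unique)
  show ae: "AE \<omega> in M. u \<omega> \<noteq> \<infinity>" by (rule nn_integral_PInf_AE[OF u fin])
  have eq: "(\<integral>\<^sup>+\<omega>. ennreal (enn2real (u \<omega>)) \<partial>M) = (\<integral>\<^sup>+\<omega>. u \<omega> \<partial>M)"
    by (rule nn_integral_cong_AE) (use ae in \<open>auto simp: less_top\<close>)
  show int: "integrable M (\<lambda>\<omega>. enn2real (u \<omega>))"
    using u fin eq by (intro integrableI_nonneg) (auto simp: less_top)
  have "ennreal (\<integral>\<omega>. enn2real (u \<omega>) \<partial>M) = (\<integral>\<^sup>+\<omega>. ennreal (enn2real (u \<omega>)) \<partial>M)"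
    by (rule nn_integral_eq_integral[OF int, symmetric]) auto
  also have "\<dots> \<le> ennreal v" using eq bound by simp
  finally show "(\<integral>\<omega>. enn2real (u \<omega>) \<partial>M) \<le> v" using \<open>0 \<le> v\<close> by simp
qed

lemma sup_deviation_integrable_bound:
  fixes \<Delta> :: "'w::{topological_space, second_countable_topology} \<Rightarrow> 'o \<Rightarrow> real"
  assumes cont: "\<And>\<omega>. \<omega> \<in> space M \<Longrightarrow> continuous_on UNIV (\<lambda>w. \<Delta> w \<omega>)"
    and meas: "\<And>w. \<Delta> w \<in> borel_measurable M"
    and bound: "(\<integral>\<^sup>+\<omega>. (\<Squnion>w. ennreal \<bar>\<Delta> w \<omega>\<bar>) \<partial>M) \<le> ennreal v" and "0 \<le> v"
  obtains U where "integrable M U" "(\<integral>\<omega>. U \<omega> \<partial>M) \<le> v" "AE \<omega> in M. \<forall>w. \<bar>\<Delta> w \<omega>\<bar> \<le> U \<omega>"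
proof -
  define u where "u \<omega> = (\<Squnion>w. ennreal \<bar>\<Delta> w \<omega>\<bar>)" for \<omega>
  obtain D :: "'w set" where D: "countable D" "\<And>X. open X \<Longrightarrow> X \<noteq> {} \<Longrightarrow> \<exists>d\<in>D. d \<in> X"
    using countable_dense_setE by blast
  have "u \<omega> = (SUP d\<in>D. ennreal \<bar>\<Delta> d \<omega>\<bar>)" if "\<omega> \<in> space M" for \<omega>
    unfolding u_def by (intro SUP_continuous_dense D(2) continuous_on_ennreal continuous_on_rabs cont that)
  moreover have "(\<lambda>\<omega>. SUP d\<in>D. ennreal \<bar>\<Delta> d \<omega>\<bar>) \<in> borel_measurable M"
    using D(1) meas by measurable
  ultimately have "u \<in> borel_measurable M" by (simp cong: measurable_cong)
  note U = integrable_enn2real_nn_integral_le[OF this bound[folded u_def] \<open>0 \<le> v\<close>]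
  have "\<bar>\<Delta> w \<omega>\<bar> \<le> enn2real (u \<omega>)" if "u \<omega> \<noteq> \<infinity>" for \<omega> w
  proof -
    have "ennreal \<bar>\<Delta> w \<omega>\<bar> \<le> u \<omega>" unfolding u_def by (rule SUP_upper) simp
    then have "enn2real (ennreal \<bar>\<Delta> w \<omega>\<bar>) \<le> enn2real (u \<omega>)"
      using that by (intro enn2real_mono) (auto simp: less_top)
    then show ?thesis by simp
  qed
  then have "AE \<omega> in M. \<forall>w. \<bar>\<Delta> w \<omega>\<bar> \<le> enn2real (u \<omega>)"
    using U(3) by (auto elim: eventually_mono)
  with U(1,2) show thesis by (rule that)
qed

lemma floor_dyadic_tendsto: "(\<lambda>k. real_of_int \<lfloor>x * 2 ^ k\<rfloor> / 2 ^ k) \<longlonglongrightarrow> x"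
proof (rule real_tendsto_sandwich[where f="\<lambda>k. x - (1/2) ^ k" and h="\<lambda>k. x"])
  have "x - (1/2) ^ k \<le> real_of_int \<lfloor>x * 2 ^ k\<rfloor> / 2 ^ k" for k :: nat
  proof -
    have "x - (1/2) ^ k = (x * 2 ^ k - 1) / 2 ^ k" by (simp add: field_simps)
    also have "\<dots> \<le> real_of_int \<lfloor>x * 2 ^ k\<rfloor> / 2 ^ k" by (intro divide_right_mono) (linarith, simp)
    finally show ?thesis .
  qed
  then show "\<forall>\<^sub>F k in sequentially. x - (1/2) ^ k \<le> real_of_int \<lfloor>x * 2 ^ k\<rfloor> / 2 ^ k"
    by simp
  have "real_of_int \<lfloor>x * 2 ^ k\<rfloor> / 2 ^ k \<le> x" for k :: nat
    by (simp add: divide_le_eq)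
  then show "\<forall>\<^sub>F k in sequentially. real_of_int \<lfloor>x * 2 ^ k\<rfloor> / 2 ^ k \<le> x"
    by simp
  show "(\<lambda>k. x - (1/2) ^ k) \<longlonglongrightarrow> x"
    using tendsto_diff[OF tendsto_const LIMSEQ_realpow_zero[of "1/2"]] by simp
qed simp

(* Rounding to a countable grid reduces the measurability of F (W \<omega>) (X \<omega>) to countably many
   fixed parameters. *)
definition dyadic_round :: "nat \<Rightarrow> real ^ 'n \<Rightarrow> real ^ 'n" where
  "dyadic_round k w = (\<chi> j. real_of_int \<lfloor>w $ j * 2 ^ k\<rfloor> / 2 ^ k)"

lemma dyadic_round_tendsto: "(\<lambda>k. dyadic_round k w) \<longlonglongrightarrow> w"
  using tendsto_vec_lambda[OF floor_dyadic_tendsto, of "\<lambda>j. w $ j"]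
  by (simp add: dyadic_round_def)

lemma countable_range_dyadic_round: "countable (range (dyadic_round k :: real ^ 'n::finite \<Rightarrow> _))"
proof (rule countable_subset)
  show "range (dyadic_round k) \<subseteq> (\<lambda>v. \<chi> j. real_of_int (v j) / 2 ^ k) ` (UNIV :: ('n \<Rightarrow> int) set)"
    unfolding dyadic_round_def by auto
qed simp

lemma measurable_dyadic_round:
  assumes W: "W \<in> borel_measurable M"
  shows "(\<lambda>\<omega>. dyadic_round k (W \<omega>)) \<in> measurable M (count_space (range (dyadic_round k)))"
proof (subst measurable_count_space_eq_countable[OF countable_range_dyadic_round], intro conjI ballI)
  fix c
  have [measurable]: "(\<lambda>\<omega>. W \<omega> $ j) \<in> borel_measurable M" for j
    using measurable_compose[OF W borel_measurable_continuous_onI[OF continuous_on_component[OF continuous_on_id]]] .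
  have "(\<lambda>\<omega>. dyadic_round k (W \<omega>)) -` {c} \<inter> space M
      = {\<omega>\<in>space M. \<forall>j. real_of_int \<lfloor>W \<omega> $ j * 2 ^ k\<rfloor> / 2 ^ k = c $ j}"
    by (auto simp: dyadic_round_def vec_eq_iff)
  also have "\<dots> \<in> sets M" by measurable
  finally show "(\<lambda>\<omega>. dyadic_round k (W \<omega>)) -` {c} \<inter> space M \<in> sets M" .
qed auto

lemma borel_measurable_caratheodory:
  fixes F :: "real ^ 'n \<Rightarrow> 'z \<Rightarrow> real"
  assumes cont: "\<And>z. z \<in> space P \<Longrightarrow> continuous_on UNIV (\<lambda>w. F w z)"
    and meas: "\<And>w. F w \<in> borel_measurable P"
    and X: "X \<in> measurable M P" and W: "W \<in> borel_measurable M"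
  shows "(\<lambda>\<omega>. F (W \<omega>) (X \<omega>)) \<in> borel_measurable M"
proof (rule borel_measurable_LIMSEQ_real)
  show "(\<lambda>\<omega>. F (dyadic_round k (W \<omega>)) (X \<omega>)) \<in> borel_measurable M" for k
    by (rule measurable_compose_countable'[where f="\<lambda>w \<omega>. F w (X \<omega>)",
          OF _ measurable_dyadic_round[OF W] countable_range_dyadic_round])
       (rule measurable_compose[OF X meas])
  fix \<omega> assume "\<omega> \<in> space M"
  then have "X \<omega> \<in> space P" using X by (auto simp: measurable_def)
  then show "(\<lambda>k. F (dyadic_round k (W \<omega>)) (X \<omega>)) \<longlonglongrightarrow> F (W \<omega>) (X \<omega>)"
    using continuous_on_tendsto_compose[OF cont dyadic_round_tendsto] by simp
qed

lemma convex_on_exp_loss: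
  assumes integrable: "\<And>w. integrable P (f w)"
    and convex: "\<And>z. z \<in> space P \<Longrightarrow> convex_on UNIV (\<lambda>w. f w z)"
  shows "convex_on UNIV (exp_loss P f)"
proof (rule convex_onI)
  fix t :: real and x y assume t: "0 < t" "t < 1"
  have "exp_loss P f ((1 - t) *\<^sub>R x + t *\<^sub>R y) \<le> (\<integral>z. (1 - t) * f x z + t * f y z \<partial>P)"
    unfolding exp_loss_def
    by (rule integral_mono) (use integrable convex t in \<open>auto intro!: convex_onD\<close>)
  also have "\<dots> = (1 - t) * exp_loss P f x + t * exp_loss P f y"
    unfolding exp_loss_def using integrable by simp
  finally show "exp_loss P f ((1 - t) *\<^sub>R x + t *\<^sub>R y) \<le> (1 - t) * exp_loss P f x + t * exp_loss P f y" .
qed simp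

lemma continuous_on_emp_loss:
  assumes "\<And>i. i \<in> I \<Longrightarrow> continuous_on UNIV (\<lambda>w. f w (Z i \<omega>))"
  shows "continuous_on UNIV (\<lambda>w. emp_loss f Z I w \<omega>)"
  unfolding emp_loss_def divide_inverse using assms by (intro continuous_intros) auto

lemma borel_measurable_emp_loss:
  fixes f :: "real ^ 'n \<Rightarrow> 'z \<Rightarrow> real"
  assumes "\<And>z. z \<in> space P \<Longrightarrow> continuous_on UNIV (\<lambda>w. f w z)" and "\<And>w. f w \<in> borel_measurable P"
    and "\<And>i. i \<in> I \<Longrightarrow> Z i \<in> measurable M P" and "W \<in> borel_measurable M"
  shows "(\<lambda>\<omega>. emp_loss f Z I (W \<omega>) \<omega>) \<in> borel_measurable M"
  unfolding emp_loss_def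
  by (intro borel_measurable_divide borel_measurable_sum borel_measurable_const
      borel_measurable_caratheodory[OF assms(1,2) _ assms(4)] assms(3))

lemma card_mult_emp_loss:
  assumes "finite I"
  shows "real (card I) * emp_loss f Z I w \<omega> = (\<Sum>i\<in>I. f w (Z i \<omega>))"
  using assms by (cases "I = {}") (auto simp: emp_loss_def)

lemma emp_loss_split:
  assumes "finite J" and "I \<subseteq> J"
  shows "real (card J) * emp_loss f Z J w \<omega>
       = real (card I) * emp_loss f Z I w \<omega> + real (card (J - I)) * emp_loss f Z (J - I) w \<omega>"
  using assms by (simp add: card_mult_emp_loss finite_subset sum.subset_diff)

lemma emp_loss_uniform_deviation:
  fixes f :: "real ^ 'n \<Rightarrow> 'z \<Rightarrow> real"
  assumes f_cont: "\<And>z. z \<in> space P \<Longrightarrow> continuous_on UNIV (\<lambda>w. f w z)"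
    and f_meas: "\<And>w. f w \<in> borel_measurable P" and L_cont: "continuous_on UNIV (exp_loss P f)"
    and Z: "\<And>i. i \<in> I \<Longrightarrow> Z i \<in> measurable M P"
    and bound: "(\<integral>\<^sup>+\<omega>. (\<Squnion>w. ennreal \<bar>exp_loss P f w - emp_loss f Z I w \<omega>\<bar>) \<partial>M) \<le> ennreal v"
    and "0 \<le> v"
  obtains E where "integrable M E" "(\<integral>\<omega>. E \<omega> \<partial>M) \<le> v"
    "AE \<omega> in M. \<forall>w. \<bar>exp_loss P f w - emp_loss f Z I w \<omega>\<bar> \<le> E \<omega>"
proof (rule sup_deviation_integrable_bound[OF _ _ bound \<open>0 \<le> v\<close>])
  show "continuous_on UNIV (\<lambda>w. exp_loss P f w - emp_loss f Z I w \<omega>)" if "\<omega> \<in> space M" for \<omega>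
    using that by (intro continuous_intros L_cont continuous_on_emp_loss f_cont measurable_space[OF Z])
  show "(\<lambda>\<omega>. exp_loss P f w - emp_loss f Z I w \<omega>) \<in> borel_measurable M" for w
    using borel_measurable_emp_loss[OF f_cont f_meas Z, where W="\<lambda>_. w"] by simp
qed

lemma borel_measurable_reg_risk:
  fixes f :: "real ^ 'n \<Rightarrow> 'z \<Rightarrow> real"
  assumes "\<And>z. z \<in> space P \<Longrightarrow> continuous_on UNIV (\<lambda>w. f w z)" and "\<And>w. f w \<in> borel_measurable P"
    and "\<And>i. i \<in> I \<Longrightarrow> Z i \<in> measurable M P" and W: "W \<in> borel_measurable M"
  shows "(\<lambda>\<omega>. reg_risk f Z V c I (W \<omega>) \<omega>) \<in> borel_measurable M"
  unfolding reg_risk_def using borel_measurable_emp_loss[OF assms] W by measurable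

lemma borel_measurable_reg_risk_minimum:
  fixes f :: "real ^ 'n \<Rightarrow> 'z \<Rightarrow> real"
  assumes f_cont: "\<And>z. z \<in> space P \<Longrightarrow> continuous_on UNIV (\<lambda>w. f w z)"
    and f_meas: "\<And>w. f w \<in> borel_measurable P" and Z: "\<And>i. i \<in> I \<Longrightarrow> Z i \<in> measurable M P"
    and W_min: "\<And>\<omega> w. \<omega> \<in> space M \<Longrightarrow> reg_risk f Z V c I (W \<omega>) \<omega> \<le> reg_risk f Z V c I w \<omega>"
  shows "(\<lambda>\<omega>. reg_risk f Z V c I (W \<omega>) \<omega>) \<in> borel_measurable M"
proof (rule borel_measurable_minimum[where h="reg_risk f Z V c I", OF _ _ W_min])
  show "continuous_on UNIV (\<lambda>w. reg_risk f Z V c I w \<omega>)" if "\<omega> \<in> space M" for \<omega>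
    unfolding reg_risk_def
    using that by (intro continuous_intros continuous_on_emp_loss f_cont measurable_space[OF Z])
  show "reg_risk f Z V c I w \<in> borel_measurable M" for w
    using borel_measurable_reg_risk[OF f_cont f_meas Z, where W="\<lambda>_. w"] by simp
qed

lemma convex_combination_deviation:
  fixes n m L Lm Ld Ln Em Ed :: real
  assumes split: "n * Ln = m * Lm + (n - m) * Ld" and "0 \<le> m" "m < n"
    and "\<bar>L - Lm\<bar> \<le> Em" "\<bar>L - Ld\<bar> \<le> Ed"
  shows "\<bar>Ln - Lm\<bar> \<le> (n - m) / n * (Ed + Em)"
proof -
  have "Ln - Lm = (n - m) / n * (Ld - Lm)"
    using split \<open>m < n\<close> \<open>0 \<le> m\<close> by (simp add: field_simps)
  also have "\<bar>\<dots>\<bar> \<le> (n - m) / n * (Ed + Em)"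
    unfolding abs_mult using assms by (intro mult_mono) auto
  finally show ?thesis .
qed

lemma regularized_minimizer_norm_bound:
  fixes L Ln :: "'w::real_normed_vector \<Rightarrow> real"
  assumes dev: "\<And>w. \<bar>L w - Ln w\<bar> \<le> E" and wstar_min: "\<And>w. L wstar \<le> L w"
    and wn_min: "\<And>w. Ln wn + \<mu> / 2 * (norm wn)\<^sup>2 \<le> Ln w + \<mu> / 2 * (norm w)\<^sup>2"
    and "0 < \<mu>"
  shows "(norm wn)\<^sup>2 \<le> (norm wstar)\<^sup>2 + 4 * E / \<mu>"
proof -
  have "\<mu> / 2 * (norm wn)\<^sup>2 \<le> \<mu> / 2 * (norm wstar)\<^sup>2 + (Ln wstar - Ln wn)"
    using wn_min[of wstar] by linarith
  also have "Ln wstar - Ln wn \<le> 2 * E"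
    using dev[of wstar] dev[of wn] wstar_min[of wn] by linarith
  finally show ?thesis using \<open>0 < \<mu>\<close> by (simp add: field_simps)
qed

lemma regularized_risk_transfer:
  fixes L Lm Ld Ln :: "'w::real_normed_vector \<Rightarrow> real" and n m \<mu>m \<mu>n :: real
  assumes split: "\<And>w. n * Ln w = m * Lm w + (n - m) * Ld w" and "0 \<le> m" "m < n"
    and dev_m: "\<And>w. \<bar>L w - Lm w\<bar> \<le> Em" and dev_d: "\<And>w. \<bar>L w - Ld w\<bar> \<le> Ed"
    and dev_n: "\<And>w. \<bar>L w - Ln w\<bar> \<le> En"
    and wstar_min: "\<And>w. L wstar \<le> L w"
    and wms_min: "\<And>w. Lm wms + \<mu>m / 2 * (norm wms)\<^sup>2 \<le> Lm w + \<mu>m / 2 * (norm w)\<^sup>2"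
    and wns_min: "\<And>w. Ln wns + \<mu>n / 2 * (norm wns)\<^sup>2 \<le> Ln w + \<mu>n / 2 * (norm w)\<^sup>2"
    and \<mu>: "0 < \<mu>n" "\<mu>n \<le> \<mu>m"
  shows "Ln w + \<mu>n / 2 * (norm w)\<^sup>2 - (Ln wns + \<mu>n / 2 * (norm wns)\<^sup>2)
       \<le> Lm w + \<mu>m / 2 * (norm w)\<^sup>2 - (Lm wms + \<mu>m / 2 * (norm wms)\<^sup>2)
         + 2 * (n - m) / n * (Ed + Em) + (\<mu>m - \<mu>n) / 2 * (norm wstar)\<^sup>2 + 2 * (\<mu>m - \<mu>n) / \<mu>n * En"
proof -
  have gap: "\<bar>Ln v - Lm v\<bar> \<le> (n - m) / n * (Ed + Em)" for v
    using convex_combination_deviation[OF split \<open>0 \<le> m\<close> \<open>m < n\<close> dev_m dev_d] .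
  have "(\<mu>m - \<mu>n) / 2 * (norm wns)\<^sup>2 \<le> (\<mu>m - \<mu>n) / 2 * ((norm wstar)\<^sup>2 + 4 * En / \<mu>n)"
    using regularized_minimizer_norm_bound[OF dev_n wstar_min wns_min \<open>0 < \<mu>n\<close>] \<mu>
    by (intro mult_left_mono) auto
  also have "\<dots> = (\<mu>m - \<mu>n) / 2 * (norm wstar)\<^sup>2 + 2 * (\<mu>m - \<mu>n) / \<mu>n * En"
    by (simp add: field_simps)
  finally have norm_wns: "(\<mu>m - \<mu>n) / 2 * (norm wns)\<^sup>2 \<le> \<dots>" .
  have "\<mu>n / 2 * (norm w)\<^sup>2 \<le> \<mu>m / 2 * (norm w)\<^sup>2"
    using \<mu> by (intro mult_right_mono) auto
  moreover have "(\<mu>m - \<mu>n) / 2 * (norm wns)\<^sup>2 = \<mu>m / 2 * (norm wns)\<^sup>2 - \<mu>n / 2 * (norm wns)\<^sup>2"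
    by (simp add: field_simps)
  ultimately show ?thesis
    using abs_le_D1[OF gap[of w]] abs_le_D2[OF gap[of wns]] wms_min[of wns] norm_wns by argo
qed

lemma integrable_nonneg_dominated:
  fixes D G :: "'o \<Rightarrow> real"
  assumes "integrable M G" "D \<in> borel_measurable M" "AE \<omega> in M. 0 \<le> D \<omega> \<and> D \<omega> \<le> G \<omega>"
  shows "integrable M D" "(\<integral>\<omega>. D \<omega> \<partial>M) \<le> (\<integral>\<omega>. G \<omega> \<partial>M)"
proof -
  show "integrable M D"
    using assms by (intro Bochner_Integration.integrable_bound[OF assms(1,2)]) (auto elim: eventually_mono)
  then show "(\<integral>\<omega>. D \<omega> \<partial>M) \<le> (\<integral>\<omega>. G \<omega> \<partial>M)"
    using assms by (intro integral_mono_AE) (auto elim: eventually_mono)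
qed

lemma expected_regularized_risk_transfer:
  fixes L :: "'w::real_normed_vector \<Rightarrow> real" and Lm Ld Ln :: "'w \<Rightarrow> 'o \<Rightarrow> real"
    and w wms wns :: "'o \<Rightarrow> 'w" and n m \<mu>m \<mu>n :: real
  assumes "prob_space M"
    and Rm_eq: "\<And>v \<omega>. Rm v \<omega> = Lm v \<omega> + \<mu>m / 2 * (norm v)\<^sup>2"
    and Rn_eq: "\<And>v \<omega>. Rn v \<omega> = Ln v \<omega> + \<mu>n / 2 * (norm v)\<^sup>2"
    and split: "\<And>v \<omega>. n * Ln v \<omega> = m * Lm v \<omega> + (n - m) * Ld v \<omega>" and "0 \<le> m" "m < n"
    and Em: "integrable M Em" "(\<integral>\<omega>. Em \<omega> \<partial>M) \<le> em" "AE \<omega> in M. \<forall>v. \<bar>L v - Lm v \<omega>\<bar> \<le> Em \<omega>"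
    and Ed: "integrable M Ed" "(\<integral>\<omega>. Ed \<omega> \<partial>M) \<le> ed" "AE \<omega> in M. \<forall>v. \<bar>L v - Ld v \<omega>\<bar> \<le> Ed \<omega>"
    and En: "integrable M En" "(\<integral>\<omega>. En \<omega> \<partial>M) \<le> en" "AE \<omega> in M. \<forall>v. \<bar>L v - Ln v \<omega>\<bar> \<le> En \<omega>"
    and wstar_min: "\<And>v. L wstar \<le> L v"
    and wms_min: "\<And>\<omega> v. \<omega> \<in> space M \<Longrightarrow> Rm (wms \<omega>) \<omega> \<le> Rm v \<omega>"
    and wns_min: "\<And>\<omega> v. \<omega> \<in> space M \<Longrightarrow> Rn (wns \<omega>) \<omega> \<le> Rn v \<omega>"
    and \<mu>: "0 < \<mu>n" "\<mu>n \<le> \<mu>m"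
    and gap_meas: "(\<lambda>\<omega>. Rn (w \<omega>) \<omega> - Rn (wns \<omega>) \<omega>) \<in> borel_measurable M"
    and gap_integrable: "integrable M (\<lambda>\<omega>. Rm (w \<omega>) \<omega> - Rm (wms \<omega>) \<omega>)"
    and gap_bound: "(\<integral>\<omega>. Rm (w \<omega>) \<omega> - Rm (wms \<omega>) \<omega> \<partial>M) \<le> \<delta>"
  shows "integrable M (\<lambda>\<omega>. Rn (w \<omega>) \<omega> - Rn (wns \<omega>) \<omega>)
    \<and> (\<integral>\<omega>. Rn (w \<omega>) \<omega> - Rn (wns \<omega>) \<omega> \<partial>M)
      \<le> \<delta> + 2 * (n - m) / n * (ed + em) + (\<mu>m - \<mu>n) / 2 * (norm wstar)\<^sup>2 + 2 * (\<mu>m - \<mu>n) / \<mu>n * en"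
proof -
  interpret prob_space M by fact
  define G where "G \<omega> = Rm (w \<omega>) \<omega> - Rm (wms \<omega>) \<omega> + 2 * (n - m) / n * (Ed \<omega> + Em \<omega>)
    + (\<mu>m - \<mu>n) / 2 * (norm wstar)\<^sup>2 + 2 * (\<mu>m - \<mu>n) / \<mu>n * En \<omega>" for \<omega>
  have AE_bound: "AE \<omega> in M. 0 \<le> Rn (w \<omega>) \<omega> - Rn (wns \<omega>) \<omega> \<and> Rn (w \<omega>) \<omega> - Rn (wns \<omega>) \<omega> \<le> G \<omega>"
    using AE_space Em(3) Ed(3) En(3)
  proof eventually_elim
    case (elim \<omega>)
    then have "Rn (w \<omega>) \<omega> - Rn (wns \<omega>) \<omega> \<le> G \<omega>"
      unfolding G_def Rm_eq Rn_eq using wms_min wns_min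
      by (intro regularized_risk_transfer[where L=L and Ld="\<lambda>v. Ld v \<omega>"] split \<open>0 \<le> m\<close> \<open>m < n\<close>
          wstar_min \<mu>) (auto simp: Rm_eq Rn_eq)
    moreover have "0 \<le> Rn (w \<omega>) \<omega> - Rn (wns \<omega>) \<omega>" using wns_min[OF elim(1)] by simp
    ultimately show ?case by simp
  qed
  have G_integrable: "integrable M G" unfolding G_def using gap_integrable Em Ed En by auto
  have "(\<integral>\<omega>. G \<omega> \<partial>M) = (\<integral>\<omega>. Rm (w \<omega>) \<omega> - Rm (wms \<omega>) \<omega> \<partial>M)
      + 2 * (n - m) / n * ((\<integral>\<omega>. Ed \<omega> \<partial>M) + (\<integral>\<omega>. Em \<omega> \<partial>M))
      + (\<mu>m - \<mu>n) / 2 * (norm wstar)\<^sup>2 + 2 * (\<mu>m - \<mu>n) / \<mu>n * (\<integral>\<omega>. En \<omega> \<partial>M)"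
    unfolding G_def using gap_integrable Em Ed En by (simp add: prob_space)
  also have "\<dots> \<le> \<delta> + 2 * (n - m) / n * (ed + em)
      + (\<mu>m - \<mu>n) / 2 * (norm wstar)\<^sup>2 + 2 * (\<mu>m - \<mu>n) / \<mu>n * en"
    using gap_bound Em(2) Ed(2) En(2) \<mu> \<open>0 \<le> m\<close> \<open>m < n\<close>
    by (intro add_mono mult_left_mono order.refl) auto
  finally show ?thesis using integrable_nonneg_dominated[OF G_integrable gap_meas AE_bound] by auto
qed

theorem proposition1:
  fixes M :: "'o measure" and P :: "'z measure" and Z :: "nat \<Rightarrow> 'o \<Rightarrow> 'z"
    and N :: nat and f :: "real ^ 'p \<Rightarrow> 'z \<Rightarrow> real"
    and V :: "nat \<Rightarrow> real" and c Mlip \<delta> :: real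
    and Sm Sn :: "nat set" and m n :: nat
    and wstar :: "real ^ 'p" and wm wms wns :: "'o \<Rightarrow> real ^ 'p"
  assumes prob: "prob_space M"
    and samples_indep: "prob_space.indep_vars M (\<lambda>_. P) Z {..<N}"
    and samples_distr: "\<forall>i<N. distr M P (Z i) = P"
    and loss_integrable: "\<forall>w. integrable P (f w)"
    and loss_convex: "\<forall>z\<in>space P. convex_on UNIV (\<lambda>w. f w z)"
    and loss_grad_lipschitz: "\<forall>z\<in>space P. \<exists>g. (\<forall>w. ((\<lambda>v. f v z) has_derivative (\<lambda>h. g w \<bullet> h)) (at w))
                                      \<and> Mlip-lipschitz_on UNIV g"
    and wstar_min: "\<forall>w. exp_loss P f wstar \<le> exp_loss P f w"
    and V_pos: "\<forall>k\<ge>1. V k > 0"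
    and V_noninc: "\<forall>k l. 1 \<le> k \<longrightarrow> k \<le> l \<longrightarrow> V l \<le> V k"
    and V_bound: "\<forall>I. I \<subseteq> {..<N} \<longrightarrow> I \<noteq> {} \<longrightarrow>
         (\<integral>\<^sup>+ \<omega>. (\<Squnion>w. ennreal \<bar>exp_loss P f w - emp_loss f Z I w \<omega>\<bar>) \<partial>M) \<le> ennreal (V (card I))"
    and c_pos: "c > 0"
    and nested: "Sm \<subseteq> Sn" "Sn \<subseteq> {..<N}"
    and card_Sm: "card Sm = m" and card_Sn: "card Sn = n"
    and m_pos: "0 < m" and m_lt_n: "m < n"
    and wms_min: "\<forall>\<omega>\<in>space M. \<forall>w. reg_risk f Z V c Sm (wms \<omega>) \<omega> \<le> reg_risk f Z V c Sm w \<omega>"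
    and wns_min: "\<forall>\<omega>\<in>space M. \<forall>w. reg_risk f Z V c Sn (wns \<omega>) \<omega> \<le> reg_risk f Z V c Sn w \<omega>"
    and wm_meas: "wm \<in> borel_measurable M"
    and wm_integrable: "integrable M (\<lambda>\<omega>. reg_risk f Z V c Sm (wm \<omega>) \<omega> - reg_risk f Z V c Sm (wms \<omega>) \<omega>)"
    and wm_accuracy: "(\<integral>\<omega>. reg_risk f Z V c Sm (wm \<omega>) \<omega> - reg_risk f Z V c Sm (wms \<omega>) \<omega> \<partial>M) \<le> \<delta>"
  shows "integrable M (\<lambda>\<omega>. reg_risk f Z V c Sn (wm \<omega>) \<omega> - reg_risk f Z V c Sn (wns \<omega>) \<omega>)
       \<and> (\<integral>\<omega>. reg_risk f Z V c Sn (wm \<omega>) \<omega> - reg_risk f Z V c Sn (wns \<omega>) \<omega> \<partial>M)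
         \<le> \<delta> + 2 * real (n - m) / real n * (V (n - m) + V m) + 2 * (V m - V n)
            + c * (V m - V n) / 2 * (norm wstar)\<^sup>2"
proof -
  interpret prob_space M by (rule prob)
  define Sd where "Sd = Sn - Sm"
  have finite_Sn: "finite Sn" using nested(2) finite_subset by blast
  have card_Sd: "card Sd = n - m"
    using card_Diff_subset[OF finite_subset[OF nested(1) finite_Sn] nested(1)] card_Sm card_Sn
    by (simp add: Sd_def)
  have Z: "Z i \<in> measurable M P" if "i \<in> Sn" for i
    using samples_indep that nested(2) unfolding indep_vars_def2 by auto
  have f_cont: "continuous_on UNIV (\<lambda>w. f w z)" if z: "z \<in> space P" for z
  proof -
    obtain g where "\<forall>w. ((\<lambda>v. f v z) has_derivative (\<lambda>h. g w \<bullet> h)) (at w)"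
      using loss_grad_lipschitz z by blast
    then show ?thesis by (intro has_derivative_continuous_on) auto
  qed
  have f_meas: "f w \<in> borel_measurable P" for w using loss_integrable by auto
  have L_cont: "continuous_on UNIV (exp_loss P f)"
    using loss_integrable loss_convex by (intro convex_on_continuous convex_on_exp_loss) auto
  have V: "0 < V n" "V n \<le> V m" using V_pos V_noninc m_pos m_lt_n by auto
  have deviation: "\<exists>E. integrable M E \<and> (\<integral>\<omega>. E \<omega> \<partial>M) \<le> V (card I)
      \<and> (AE \<omega> in M. \<forall>w. \<bar>exp_loss P f w - emp_loss f Z I w \<omega>\<bar> \<le> E \<omega>)"
    if I: "I \<subseteq> Sn" "I \<noteq> {}" for I
  proof -
    have nonneg: "0 \<le> V (card I)"
      using I V_pos finite_subset[OF I(1) finite_Sn] by (simp add: Suc_le_eq card_gt_0_iff less_imp_le)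
    have bound: "(\<integral>\<^sup>+\<omega>. (\<Squnion>w. ennreal \<bar>exp_loss P f w - emp_loss f Z I w \<omega>\<bar>) \<partial>M) \<le> ennreal (V (card I))"
      using V_bound[rule_format, OF order_trans[OF I(1) nested(2)] I(2)] .
    have ZI: "Z i \<in> measurable M P" if "i \<in> I" for i using Z subsetD[OF I(1) that] .
    show ?thesis using emp_loss_uniform_deviation[OF f_cont f_meas L_cont ZI bound nonneg] by blast
  qed
  have "Sm \<noteq> {}" "Sd \<noteq> {}" "Sn \<noteq> {}" using card_Sm card_Sd card_Sn m_pos m_lt_n by auto
  have "Sd \<subseteq> Sn" by (auto simp: Sd_def)
  obtain Em where Em: "integrable M Em" "(\<integral>\<omega>. Em \<omega> \<partial>M) \<le> V m"
      "AE \<omega> in M. \<forall>w. \<bar>exp_loss P f w - emp_loss f Z Sm w \<omega>\<bar> \<le> Em \<omega>"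
    using deviation[OF nested(1) \<open>Sm \<noteq> {}\<close>] unfolding card_Sm by blast
  obtain Ed where Ed: "integrable M Ed" "(\<integral>\<omega>. Ed \<omega> \<partial>M) \<le> V (n - m)"
      "AE \<omega> in M. \<forall>w. \<bar>exp_loss P f w - emp_loss f Z Sd w \<omega>\<bar> \<le> Ed \<omega>"
    using deviation[OF \<open>Sd \<subseteq> Sn\<close> \<open>Sd \<noteq> {}\<close>] unfolding card_Sd by blast
  obtain En where En: "integrable M En" "(\<integral>\<omega>. En \<omega> \<partial>M) \<le> V n"
      "AE \<omega> in M. \<forall>w. \<bar>exp_loss P f w - emp_loss f Z Sn w \<omega>\<bar> \<le> En \<omega>"
    using deviation[OF order.refl \<open>Sn \<noteq> {}\<close>] unfolding card_Sn by blast
  have split: "real n * emp_loss f Z Sn w \<omega> = real m * emp_loss f Z Sm w \<omega> + (real n - real m) * emp_loss f Z Sd w \<omega>"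
    for w \<omega>
    using emp_loss_split[OF finite_Sn nested(1)] card_Sm card_Sn card_Sd m_lt_n by (simp add: Sd_def)
  have gap_meas: "(\<lambda>\<omega>. reg_risk f Z V c Sn (wm \<omega>) \<omega> - reg_risk f Z V c Sn (wns \<omega>) \<omega>) \<in> borel_measurable M"
    using nested(2) wns_min
    by (intro borel_measurable_diff borel_measurable_reg_risk[OF f_cont f_meas Z wm_meas]
        borel_measurable_reg_risk_minimum[OF f_cont f_meas Z]) auto
  have "integrable M (\<lambda>\<omega>. reg_risk f Z V c Sn (wm \<omega>) \<omega> - reg_risk f Z V c Sn (wns \<omega>) \<omega>)
    \<and> (\<integral>\<omega>. reg_risk f Z V c Sn (wm \<omega>) \<omega> - reg_risk f Z V c Sn (wns \<omega>) \<omega> \<partial>M)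
      \<le> \<delta> + 2 * (real n - real m) / real n * (V (n - m) + V m)
        + (c * V m - c * V n) / 2 * (norm wstar)\<^sup>2 + 2 * (c * V m - c * V n) / (c * V n) * V n"
    using prob split Em Ed En wstar_min wms_min wns_min V c_pos m_lt_n gap_meas wm_integrable wm_accuracy
    by (intro expected_regularized_risk_transfer[where L="exp_loss P f" and Lm="emp_loss f Z Sm"
          and Ld="emp_loss f Z Sd" and Ln="emp_loss f Z Sn" and \<mu>m="c * V m" and \<mu>n="c * V n"])
       (auto simp: reg_risk_def card_Sm card_Sn)
  moreover have "2 * (c * V m - c * V n) / (c * V n) * V n = 2 * (V m - V n)"
    and "(c * V m - c * V n) / 2 = c * (V m - V n) / 2" and "real (n - m) = real n - real m"
    using V c_pos m_lt_n by (auto simp: field_simps)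
  ultimately show ?thesis by (simp only:) argo
qed

end
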